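(* For all integers $s,d\geq 1$ there exists an integer $h'(s,d)$ such that the following holds. Let $S$ be a set of $s$ nonzero vectors in $\mathbb{R}^d$, and let $\mathcal{F}=\{U_1,\dots,U_n\}$ be a finite family where each $U_i$ is (the underlying set of) a polyhedral subcomplex of some polytope $P_i\subseteq\mathbb{R}^d$ which can be obtained as an intersection of half-spaces whose normal vectors belong to $S$. Then $\mathcal{F}$ has Helly number at most $h'(s,d)$.
   Context: A polytope is a bounded intersection of finitely many closed half-spaces; a polyhedral subcomplex of a polytope $P$ is a collection of faces of $P$ closed under taking faces. The Helly number of a family $\mathcal{F}$ of sets is defined as follows: if $\bigcap_{U\in\mathcal{F}}U=\emptyset$, it is the largest size of a subfamily $\mathcal{G}\subseteq\mathcal{F}$ such that $\bigcap\mathcal{G}=\emptyset$ but every proper subfamily of $\mathcal{G}$ has nonempty intersection; otherwise the Helly number is $1$. *)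

theory Defs
  imports "HOL-Analysis.Analysis"
begin

definition S_polytope :: "'a::euclidean_space set \<Rightarrow> 'a set \<Rightarrow> bool" where
  "S_polytope S P \<longleftrightarrow> bounded P \<and>
     (\<exists>H. finite H \<and> fst ` H \<subseteq> S \<and> P = (\<Inter>p\<in>H. {x. fst p \<bullet> x \<le> snd p}))"

definition polyhedral_subcomplex :: "'a::euclidean_space set set \<Rightarrow> 'a set \<Rightarrow> bool" where
  "polyhedral_subcomplex C P \<longleftrightarrow>
     (\<forall>f\<in>C. f face_of P) \<and> (\<forall>f\<in>C. \<forall>g. g face_of f \<longrightarrow> g \<in> C)"

definition helly_number :: "'a set set \<Rightarrow> nat" where
  "helly_number F =
     (if \<Inter>F = {} then
        Max {card G | G. G \<subseteq> F \<and> \<Inter>G = {} \<and> (\<forall>G'. G' \<subset> G \<longrightarrow> \<Inter>G' \<noteq> {})}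
      else 1)"

end

theory Submission
  imports Defs
begin

text \<open>Let G be a minimal subfamily with empty intersection. For each of the at most s normals
  keep one member of G carrying a tightest constraint with that normal; the kept members cut out
  the polyhedron Q given by all constraints of all members. For each other member U choose a point
  w U lying in every member except U; these points lie in Q. Two points of Q with the same set of
  active normals lie in the same faces of every polyhedron defined by some of the constraints,
  hence in the same unions of faces, so U \<mapsto> active normals of w U is injective and
  card G \<le> s + 2 ^ s.\<close>

definition halfspace_inter :: "('a::real_inner \<times> real) set \<Rightarrow> 'a set" where
  "halfspace_inter H = (\<Inter>p\<in>H. {x. fst p \<bullet> x \<le> snd p})"

definition active_constraints :: "('a::real_inner \<times> real) set \<Rightarrow> 'a \<Rightarrow> ('a \<times> real) set" where
  "active_constraints H x = {p\<in>H. fst p \<bullet> x = snd p}"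

lemma halfspace_inter_antimono: "H \<subseteq> H' \<Longrightarrow> halfspace_inter H' \<subseteq> halfspace_inter H"
  unfolding halfspace_inter_def by auto

text \<open>Moving from x' through x a little further keeps the active constraints of x tight
  and, H being finite, the inactive ones slack.\<close>
lemma open_segment_extension_in_halfspace_inter:
  fixes x x' :: "'a::real_inner"
  assumes "finite H" and x: "x \<in> halfspace_inter H" and x': "x' \<in> halfspace_inter H"
    and active: "active_constraints H x = active_constraints H x'" and "x \<noteq> x'"
  obtains z where "z \<in> halfspace_inter H" "x \<in> open_segment z x'"
proof -
  define T where "T = active_constraints H x"
  define slack where "slack = (\<Inter>p\<in>H - T. {y. fst p \<bullet> y < snd p})"
  have "open slack" unfolding slack_def using \<open>finite H\<close> by (intro open_INT) (auto intro: open_halfspace_lt)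
  moreover have "x \<in> slack"
    using x unfolding slack_def T_def halfspace_inter_def active_constraints_def by force
  ultimately obtain e where e: "e > 0" "ball x e \<subseteq> slack" by (meson open_contains_ball)
  have nz: "norm (x - x') > 0" using \<open>x \<noteq> x'\<close> by simp
  define t where "t = e / (2 * norm (x - x'))"
  have t: "t > 0" unfolding t_def using e nz by simp
  define z where "z = x + t *\<^sub>R (x - x')"
  have "dist x z = t * norm (x - x')" unfolding z_def dist_norm by (simp add: t less_imp_le)
  also have "\<dots> = e / 2" unfolding t_def using nz by simp
  finally have "z \<in> slack" using e by auto
  have "fst p \<bullet> z \<le> snd p" if "p \<in> H" for p
  proof (cases "p \<in> T")
    case True
    then have "fst p \<bullet> x = snd p" "fst p \<bullet> x' = snd p"
      using active unfolding T_def active_constraints_def by auto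
    then show ?thesis unfolding z_def by (simp add: inner_add_right inner_diff_right)
  next
    case False
    then show ?thesis using \<open>z \<in> slack\<close> that unfolding slack_def by force
  qed
  then have "z \<in> halfspace_inter H" unfolding halfspace_inter_def by auto
  moreover have "x \<in> open_segment z x'"
  proof -
    have "z \<noteq> x'"
    proof
      assume "z = x'"
      then have "(1 + t) *\<^sub>R (x - x') = 0" unfolding z_def by (simp add: algebra_simps)
      then show False using t \<open>x \<noteq> x'\<close> by simp
    qed
    define u where "u = t / (1 + t)"
    have u: "u > 0" "u < 1" unfolding u_def using t by auto
    have "1 - u = 1 / (1 + t)" unfolding u_def using t by (simp add: field_simps)
    then have "(1 - u) *\<^sub>R z + u *\<^sub>R x' = (1 / (1 + t)) *\<^sub>R (z + t *\<^sub>R x')"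
      unfolding u_def by (simp add: scaleR_add_right divide_inverse)
    also have "z + t *\<^sub>R x' = (1 + t) *\<^sub>R x" unfolding z_def by (simp add: algebra_simps)
    finally have "(1 - u) *\<^sub>R z + u *\<^sub>R x' = x" using t by simp
    then show ?thesis using u \<open>z \<noteq> x'\<close> unfolding in_segment by metis
  qed
  ultimately show ?thesis using that by blast
qed

lemma face_of_halfspace_inter_same_active_constraints:
  assumes "finite H" and "f face_of halfspace_inter H" and "x \<in> f"
    and x': "x' \<in> halfspace_inter H"
    and "active_constraints H x = active_constraints H x'"
  shows "x' \<in> f"
proof (cases "x = x'")
  case False
  have "x \<in> halfspace_inter H" using assms face_of_imp_subset by blast
  then obtain z where "z \<in> halfspace_inter H" "x \<in> open_segment z x'"
    using open_segment_extension_in_halfspace_inter[OF \<open>finite H\<close> _ x'] assms(5) False by blast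
  then show ?thesis using assms unfolding face_of_def by blast
qed (use \<open>x \<in> f\<close> in simp)

lemma active_constraints_eq_if_same_normals:
  assumes x: "x \<in> halfspace_inter H" and x': "x' \<in> halfspace_inter H"
    and normals: "fst ` active_constraints H x = fst ` active_constraints H x'"
  shows "active_constraints H x = active_constraints H x'"
proof -
  have *: "p \<in> active_constraints H y'"
    if y: "y \<in> halfspace_inter H" and y': "y' \<in> halfspace_inter H"
      and same: "fst ` active_constraints H y = fst ` active_constraints H y'"
      and p: "p \<in> active_constraints H y" for y y' p
  proof -
    obtain q where q: "q \<in> active_constraints H y'" "fst q = fst p"
      using p same by (metis (no_types, lifting) imageE imageI)
    have "snd q \<le> snd p"
      using y' p q unfolding active_constraints_def halfspace_inter_def by force
    moreover have "snd p \<le> snd q"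
      using y p q unfolding active_constraints_def halfspace_inter_def by force
    ultimately show ?thesis using p q unfolding active_constraints_def by auto
  qed
  show ?thesis using *[OF x x' normals] *[OF x' x normals[symmetric]] by blast
qed

lemma Union_subcomplex_mem_if_same_active_normals:
  assumes "finite HH" and "H \<subseteq> HH"
    and C: "polyhedral_subcomplex C (halfspace_inter H)"
    and "x \<in> \<Union>C" and x: "x \<in> halfspace_inter HH" and x': "x' \<in> halfspace_inter HH"
    and normals: "fst ` active_constraints HH x = fst ` active_constraints HH x'"
  shows "x' \<in> \<Union>C"
proof -
  obtain f where f: "f \<in> C" "x \<in> f" using \<open>x \<in> \<Union>C\<close> by blast
  have "active_constraints H y = H \<inter> active_constraints HH y" for y
    using \<open>H \<subseteq> HH\<close> unfolding active_constraints_def by auto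
  then have "active_constraints H x = active_constraints H x'"
    using active_constraints_eq_if_same_normals[OF x x' normals] by simp
  moreover have "f face_of halfspace_inter H" using C f unfolding polyhedral_subcomplex_def by blast
  moreover have "x' \<in> halfspace_inter H" using x' halfspace_inter_antimono[OF \<open>H \<subseteq> HH\<close>] by blast
  ultimately have "x' \<in> f"
    using face_of_halfspace_inter_same_active_constraints \<open>finite HH\<close> \<open>H \<subseteq> HH\<close> f(2)
    by (metis finite_subset)
  then show ?thesis using f by blast
qed

lemma halfspace_inter_few_suffice:
  assumes "finite S" "finite G" and H: "\<And>U. U \<in> G \<Longrightarrow> finite (H U) \<and> fst ` H U \<subseteq> S"
  obtains A where "A \<subseteq> G" "card A \<le> card S"
    "(\<Inter>V\<in>A. halfspace_inter (H V)) \<subseteq> halfspace_inter (\<Union>U\<in>G. H U)"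
proof -
  define HH where "HH = (\<Union>U\<in>G. H U)"
  have "finite HH" unfolding HH_def using assms by auto
  define bmin where "bmin v = Min {b. (v, b) \<in> HH}" for v
  have fin: "finite {b. (v, b) \<in> HH}" for v
  proof -
    have "{b. (v, b) \<in> HH} \<subseteq> snd ` HH" by force
    then show ?thesis using \<open>finite HH\<close> finite_subset by blast
  qed
  have "\<exists>U\<in>G. (v, bmin v) \<in> H U" if "v \<in> fst ` HH" for v
  proof -
    have "{b. (v, b) \<in> HH} \<noteq> {}" using that by force
    then have "bmin v \<in> {b. (v, b) \<in> HH}" unfolding bmin_def using fin Min_in by blast
    then show ?thesis unfolding HH_def by blast
  qed
  then obtain sel where sel: "\<And>v. v \<in> fst ` HH \<Longrightarrow> sel v \<in> G \<and> (v, bmin v) \<in> H (sel v)"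
    by metis
  define A where "A = sel ` fst ` HH"
  have "A \<subseteq> G" unfolding A_def using sel by blast
  moreover have "card A \<le> card S"
  proof -
    have "card A \<le> card (fst ` HH)"
      unfolding A_def using \<open>finite HH\<close> by (intro card_image_le) simp
    also have "\<dots> \<le> card S"
      using H \<open>finite S\<close> unfolding HH_def by (intro card_mono) auto
    finally show ?thesis .
  qed
  moreover have "x \<in> halfspace_inter HH" if x: "x \<in> (\<Inter>V\<in>A. halfspace_inter (H V))" for x
  proof -
    have "v \<bullet> x \<le> b" if "(v, b) \<in> HH" for v b
    proof -
      have v: "v \<in> fst ` HH" using that by force
      have "x \<in> halfspace_inter (H (sel v))" using x v unfolding A_def by blast
      then have "v \<bullet> x \<le> bmin v" using sel[OF v] unfolding halfspace_inter_def by auto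
      also have "bmin v \<le> b" unfolding bmin_def using fin that by (intro Min_le) auto
      finally show ?thesis .
    qed
    then show ?thesis unfolding halfspace_inter_def by auto
  qed
  ultimately show ?thesis using that unfolding HH_def by blast
qed

lemma card_minimal_empty_family_le:
  fixes G :: "'a::euclidean_space set set"
  assumes "finite S" "finite G"
    and rep: "\<And>U. U \<in> G \<Longrightarrow> \<exists>H C. finite H \<and> fst ` H \<subseteq> S \<and>
                 polyhedral_subcomplex C (halfspace_inter H) \<and> U = \<Union>C"
    and "\<Inter>G = {}" and minimal: "\<And>G'. G' \<subset> G \<Longrightarrow> \<Inter>G' \<noteq> {}"
  shows "card G \<le> card S + 2 ^ card S"
proof -
  obtain H C where HC: "\<And>U. U \<in> G \<Longrightarrow> finite (H U) \<and> fst ` H U \<subseteq> S \<and>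
      polyhedral_subcomplex (C U) (halfspace_inter (H U)) \<and> U = \<Union>(C U)"
    using rep by metis
  have U_subset: "U \<subseteq> halfspace_inter (H U)" if "U \<in> G" for U
    using HC[OF that] face_of_imp_subset unfolding polyhedral_subcomplex_def by blast
  define HH where "HH = (\<Union>U\<in>G. H U)"
  have "finite HH" unfolding HH_def using HC \<open>finite G\<close> by blast
  have "\<And>U. U \<in> G \<Longrightarrow> finite (H U) \<and> fst ` H U \<subseteq> S" using HC by blast
  then obtain A where A: "A \<subseteq> G" "card A \<le> card S"
    "(\<Inter>V\<in>A. halfspace_inter (H V)) \<subseteq> halfspace_inter HH"
    unfolding HH_def by (rule halfspace_inter_few_suffice[OF \<open>finite S\<close> \<open>finite G\<close>])
  have "\<exists>y. y \<in> \<Inter>(G - {U})" if "U \<in> G" for U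
    using minimal[of "G - {U}"] that by blast
  then obtain w where w: "\<And>U. U \<in> G \<Longrightarrow> w U \<in> \<Inter>(G - {U})" by metis
  have w_notin: "w U \<notin> U" if "U \<in> G" for U
    using w[OF that] \<open>\<Inter>G = {}\<close> that by blast
  have w_feasible: "w U \<in> halfspace_inter HH" if "U \<in> G - A" for U
  proof -
    have "w U \<in> halfspace_inter (H V)" if "V \<in> A" for V
      using w U_subset \<open>A \<subseteq> G\<close> \<open>U \<in> G - A\<close> that by blast
    then show ?thesis using A(3) by blast
  qed
  define pattern where "pattern U = fst ` active_constraints HH (w U)" for U
  have "inj_on pattern (G - A)"
  proof (rule inj_onI, rule ccontr)
    fix U U' assume U: "U \<in> G - A" and U': "U' \<in> G - A"
      and same: "pattern U = pattern U'" and "U \<noteq> U'"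
    have U'_rep: "finite (H U')" "polyhedral_subcomplex (C U') (halfspace_inter (H U'))"
      "U' = \<Union>(C U')"
      using HC U' by auto
    have "w U \<in> U'" using w U U' \<open>U \<noteq> U'\<close> by blast
    moreover have "H U' \<subseteq> HH" using U' unfolding HH_def by blast
    ultimately have "w U' \<in> \<Union>(C U')"
      using Union_subcomplex_mem_if_same_active_normals[OF \<open>finite HH\<close> _ U'_rep(2) _
          w_feasible[OF U] w_feasible[OF U']] same U'_rep(3)
      unfolding pattern_def by blast
    then show False using w_notin U' U'_rep(3) by blast
  qed
  moreover have "pattern ` (G - A) \<subseteq> Pow S"
    unfolding pattern_def active_constraints_def HH_def using HC by blast
  ultimately have "card (G - A) \<le> card (Pow S)"
    using \<open>finite S\<close> by (intro card_inj_on_le) auto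
  then have "card (G - A) \<le> 2 ^ card S" by (simp add: card_Pow \<open>finite S\<close>)
  moreover have "card (G - A) = card G - card A" "card A \<le> card G"
    using \<open>finite G\<close> \<open>A \<subseteq> G\<close> by (auto intro: card_Diff_subset card_mono finite_subset)
  ultimately show ?thesis using A(2) by linarith
qed

lemma exists_minimal_empty_subfamily:
  assumes "finite F" "\<Inter>F = {}"
  obtains G where "G \<subseteq> F" "\<Inter>G = {}" "\<And>G'. G' \<subset> G \<Longrightarrow> \<Inter>G' \<noteq> {}"
proof -
  obtain G where G: "G \<subseteq> F \<and> \<Inter>G = {}" and least: "\<And>G'. G' \<subseteq> F \<and> \<Inter>G' = {} \<Longrightarrow> card G \<le> card G'"
    using ex_has_least_nat[of "\<lambda>G. G \<subseteq> F \<and> \<Inter>G = {}" F card] assms by blast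
  have "\<Inter>G' \<noteq> {}" if "G' \<subset> G" for G'
  proof -
    have "card G' < card G" using that G \<open>finite F\<close> finite_subset psubset_card_mono by metis
    then show ?thesis using least[of G'] that G by fastforce
  qed
  then show ?thesis using that G by blast
qed

lemma helly_number_le:
  assumes "finite F" "h \<ge> 1"
    and bound: "\<And>G. G \<subseteq> F \<Longrightarrow> \<Inter>G = {} \<Longrightarrow> (\<forall>G'. G' \<subset> G \<longrightarrow> \<Inter>G' \<noteq> {}) \<Longrightarrow> card G \<le> h"
  shows "helly_number F \<le> h"
proof (cases "\<Inter>F = {}")
  case True
  define M where "M = {card G | G. G \<subseteq> F \<and> \<Inter>G = {} \<and> (\<forall>G'. G' \<subset> G \<longrightarrow> \<Inter>G' \<noteq> {})}"
  obtain G where G: "G \<subseteq> F" "\<Inter>G = {}" "\<forall>G'. G' \<subset> G \<longrightarrow> \<Inter>G' \<noteq> {}"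
    using exists_minimal_empty_subfamily[OF \<open>finite F\<close> True] by blast
  have "M \<subseteq> card ` Pow F" unfolding M_def by blast
  then have "finite M" using \<open>finite F\<close> finite_subset by blast
  moreover have "M \<noteq> {}" using G unfolding M_def by blast
  moreover have "\<forall>m\<in>M. m \<le> h"
  proof
    fix m assume "m \<in> M"
    then obtain G where "m = card G" "G \<subseteq> F" "\<Inter>G = {}" "\<forall>G'. G' \<subset> G \<longrightarrow> \<Inter>G' \<noteq> {}"
      unfolding M_def by blast
    then show "m \<le> h" using bound by blast
  qed
  ultimately show ?thesis
    unfolding helly_number_def using True by (simp add: M_def[symmetric] Max_le_iff)
qed (use \<open>h \<ge> 1\<close> in \<open>simp add: helly_number_def\<close>)

theorem corollary5:
  fixes s :: nat
  assumes "s \<ge> 1"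
  shows "\<exists>h::nat. \<forall>(S :: (real^'n) set) (F :: (real^'n) set set).
           finite S \<and> card S = s \<and> 0 \<notin> S \<and> finite F \<and>
           (\<forall>U\<in>F. \<exists>P C. S_polytope S P \<and> polyhedral_subcomplex C P \<and> U = \<Union>C)
           \<longrightarrow> helly_number F \<le> h"
proof (intro exI[of _ "s + 2 ^ s"] allI impI)
  fix S :: "(real^'n) set" and F :: "(real^'n) set set"
  assume "finite S \<and> card S = s \<and> 0 \<notin> S \<and> finite F \<and>
           (\<forall>U\<in>F. \<exists>P C. S_polytope S P \<and> polyhedral_subcomplex C P \<and> U = \<Union>C)"
  then have S: "finite S" "card S = s" and "finite F"
    and F: "\<forall>U\<in>F. \<exists>P C. S_polytope S P \<and> polyhedral_subcomplex C P \<and> U = \<Union>C"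
    by auto
  have rep: "\<exists>H C. finite H \<and> fst ` H \<subseteq> S \<and>
               polyhedral_subcomplex C (halfspace_inter H) \<and> U = \<Union>C" if "U \<in> F" for U
  proof -
    obtain P C where "S_polytope S P" "polyhedral_subcomplex C P" "U = \<Union>C"
      using F \<open>U \<in> F\<close> by blast
    moreover obtain H where "finite H" "fst ` H \<subseteq> S" "P = halfspace_inter H"
      using \<open>S_polytope S P\<close> unfolding S_polytope_def halfspace_inter_def by blast
    ultimately show ?thesis by blast
  qed
  show "helly_number F \<le> s + 2 ^ s"
  proof (rule helly_number_le[OF \<open>finite F\<close>])
    fix G assume G: "G \<subseteq> F" "\<Inter>G = {}" "\<forall>G'. G' \<subset> G \<longrightarrow> \<Inter>G' \<noteq> {}"
    have "card G \<le> card S + 2 ^ card S"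
    proof (rule card_minimal_empty_family_le[OF \<open>finite S\<close> finite_subset[OF G(1) \<open>finite F\<close>]])
      show "\<And>U. U \<in> G \<Longrightarrow> \<exists>H C. finite H \<and> fst ` H \<subseteq> S \<and>
          polyhedral_subcomplex C (halfspace_inter H) \<and> U = \<Union>C"
        using rep G(1) by blast
    qed (use G in auto)
    then show "card G \<le> s + 2 ^ s" using S(2) by simp
  qed (use assms in simp)
qed

end
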